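(* Let $G$ be a connected triangle-free graph with no full star-cutset which is not a path on at most $4$ vertices. Then every subdivision $G^*$ of $G$ is a connected triangle-free graph with no full star-cutset.
   Context: A full star-cutset of a connected graph $G$ is a set $N[u]=\{u\}\cup N(u)$ whose removal disconnects $G$. A subdivision of a graph is obtained by replacing edges by paths. *)

theory Defs
  imports Main
begin

definition graph :: "'a set \<Rightarrow> 'a set set \<Rightarrow> bool" where
  "graph V E \<longleftrightarrow> finite V \<and> (\<forall>e\<in>E. \<exists>x y. x \<noteq> y \<and> x \<in> V \<and> y \<in> V \<and> e = {x, y})"

definition adj :: "'a set set \<Rightarrow> 'a \<Rightarrow> 'a \<Rightarrow> bool" where
  "adj E x y \<longleftrightarrow> {x, y} \<in> E \<and> x \<noteq> y"

definition induced_edges :: "'a set set \<Rightarrow> 'a set \<Rightarrow> 'a set set" where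
  "induced_edges E S = {e \<in> E. e \<subseteq> S}"

definition connected_graph :: "'a set \<Rightarrow> 'a set set \<Rightarrow> bool" where
  "connected_graph V E \<longleftrightarrow> V \<noteq> {} \<and> (\<forall>x\<in>V. \<forall>y\<in>V. (adj E)\<^sup>*\<^sup>* x y)"

text \<open>Disconnected: there are two vertices not joined by any walk
  (so the empty graph is not disconnected).\<close>
definition disconnected_graph :: "'a set \<Rightarrow> 'a set set \<Rightarrow> bool" where
  "disconnected_graph V E \<longleftrightarrow> (\<exists>x\<in>V. \<exists>y\<in>V. \<not> (adj E)\<^sup>*\<^sup>* x y)"

definition triangle_free :: "'a set \<Rightarrow> 'a set set \<Rightarrow> bool" where
  "triangle_free V E \<longleftrightarrow> \<not> (\<exists>x\<in>V. \<exists>y\<in>V. \<exists>z\<in>V. adj E x y \<and> adj E y z \<and> adj E x z)"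

definition closed_nbhd :: "'a set \<Rightarrow> 'a set set \<Rightarrow> 'a \<Rightarrow> 'a set" where
  "closed_nbhd V E u = insert u {v \<in> V. adj E u v}"

definition full_star_cutset :: "'a set \<Rightarrow> 'a set set \<Rightarrow> 'a set \<Rightarrow> bool" where
  "full_star_cutset V E S \<longleftrightarrow> (\<exists>u\<in>V. S = closed_nbhd V E u \<and>
      disconnected_graph (V - S) (induced_edges E (V - S)))"

definition has_full_star_cutset :: "'a set \<Rightarrow> 'a set set \<Rightarrow> bool" where
  "has_full_star_cutset V E \<longleftrightarrow> (\<exists>S. full_star_cutset V E S)"

definition is_path_graph :: "'a set \<Rightarrow> 'a set set \<Rightarrow> bool" where
  "is_path_graph V E \<longleftrightarrow> (\<exists>xs. xs \<noteq> [] \<and> distinct xs \<and> set xs = V \<and>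
      E = {{xs ! i, xs ! Suc i} | i. Suc i < length xs})"

inductive subdivision :: "'a set \<Rightarrow> 'a set set \<Rightarrow> 'a set \<Rightarrow> 'a set set \<Rightarrow> bool"
  for V E where
  refl: "subdivision V E V E"
| step: "subdivision V E V' E' \<Longrightarrow> {u, v} \<in> E' \<Longrightarrow> u \<noteq> v \<Longrightarrow> w \<notin> V' \<Longrightarrow>
         subdivision V E (insert w V') ((E' - {{u, v}}) \<union> {{u, w}, {w, v}})"

end

theory Submission
  imports Defs
begin

text \<open>The hypotheses on \<open>G\<close> are preserved by subdividing a single edge \<open>uv\<close> with a new
  vertex \<open>w\<close>, so the theorem follows by induction on the subdivision. The new graph has more
  vertices, and every connected triangle-free graph on at most three vertices is a path; so it is
  not a short path. For the star-cutsets: \<open>G' - N[w]\<close> is \<open>G - u - v\<close>, which triangle-freeness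
  covers by the connected graphs \<open>G - N[u]\<close> and \<open>G - N[v]\<close>; these can only fail to be joined
  when \<open>G\<close> is a path on four vertices. \<open>G' - N[u]\<close> is \<open>G - N[u]\<close> plus \<open>v\<close>, which is attached
  to it through a second neighbour unless \<open>v\<close> is a leaf, in which case \<open>u\<close> dominates \<open>G\<close>
  (again, unless \<open>G\<close> is a path on four vertices). For any other vertex \<open>x\<close>, \<open>G' - N[x]\<close> is
  \<open>G - N[x]\<close> with the edge \<open>uv\<close> replaced by \<open>u-w-v\<close>, and \<open>w\<close> is attached to whichever of
  \<open>u, v\<close> is not adjacent to \<open>x\<close>.\<close>

lemma adj_commute: "adj E x y \<longleftrightarrow> adj E y x"
  by (auto simp: adj_def insert_commute)

lemma adj_irrefl: "\<not> adj E x x"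
  by (simp add: adj_def)

lemma adj_induced_edges_iff: "adj (induced_edges E T) a b \<longleftrightarrow> adj E a b \<and> a \<in> T \<and> b \<in> T"
  by (auto simp: adj_def induced_edges_def)

lemma graph_adj_in_vertices: "graph V E \<Longrightarrow> adj E x y \<Longrightarrow> x \<in> V \<and> y \<in> V"
  unfolding graph_def adj_def by (fastforce simp: doubleton_eq_iff)

lemma closed_nbhd_iff: "y \<in> closed_nbhd V E x \<longleftrightarrow> y = x \<or> (y \<in> V \<and> adj E x y)"
  by (auto simp: closed_nbhd_def)

lemma triangle_freeD:
  "graph V E \<Longrightarrow> triangle_free V E \<Longrightarrow> adj E x y \<Longrightarrow> adj E y z \<Longrightarrow> adj E x z \<Longrightarrow> False"
  unfolding triangle_free_def using graph_adj_in_vertices by metis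

text \<open>Unlike \<open>connected_graph\<close>, this holds for \<open>T = {}\<close>.\<close>
definition connected_on :: "'a set set \<Rightarrow> 'a set \<Rightarrow> bool" where
  "connected_on E T \<longleftrightarrow> (\<forall>a\<in>T. \<forall>b\<in>T. (adj (induced_edges E T))\<^sup>*\<^sup>* a b)"

lemma connected_graph_iff_connected_on:
  "graph V E \<Longrightarrow> connected_graph V E \<longleftrightarrow> V \<noteq> {} \<and> connected_on E V"
proof -
  assume "graph V E"
  then have "adj (induced_edges E V) = adj E"
    by (auto simp: fun_eq_iff adj_induced_edges_iff dest: graph_adj_in_vertices)
  then show ?thesis
    by (simp add: connected_graph_def connected_on_def)
qed

lemma no_full_star_cutset_iff:
  "\<not> has_full_star_cutset V E \<longleftrightarrow> (\<forall>x\<in>V. connected_on E (V - closed_nbhd V E x))"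
  by (auto simp: has_full_star_cutset_def full_star_cutset_def disconnected_graph_def connected_on_def)

lemma induced_reach_mono:
  assumes "T \<subseteq> T'" "(adj (induced_edges E T))\<^sup>*\<^sup>* a b"
  shows "(adj (induced_edges E T'))\<^sup>*\<^sup>* a b"
proof -
  have "adj (induced_edges E T) \<le> adj (induced_edges E T')"
    using assms(1) by (auto simp: adj_induced_edges_iff)
  then show ?thesis
    using rtranclp_mono assms(2) by blast
qed

lemma induced_reach_sym:
  "(adj (induced_edges E T))\<^sup>*\<^sup>* a b \<Longrightarrow> (adj (induced_edges E T))\<^sup>*\<^sup>* b a"
  by (rule sympD[OF symp_rtranclp]) (auto simp: symp_def adj_induced_edges_iff adj_commute)

lemma connected_onI_hub:
  assumes "\<And>x. x \<in> T \<Longrightarrow> (adj (induced_edges E T))\<^sup>*\<^sup>* x c"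
  shows "connected_on E T"
  unfolding connected_on_def
proof (intro ballI)
  fix a b assume "a \<in> T" "b \<in> T"
  then show "(adj (induced_edges E T))\<^sup>*\<^sup>* a b"
    using assms induced_reach_sym[OF assms[of b]] by (blast intro: rtranclp_trans)
qed

lemma connected_on_singleton: "connected_on E {a}"
  by (simp add: connected_on_def)

lemma connected_on_Un:
  assumes A: "connected_on E A" and B: "connected_on E B" and "a \<in> A" "b \<in> B"
    and ab: "a = b \<or> adj E a b"
  shows "connected_on E (A \<union> B)"
proof (rule connected_onI_hub)
  have "(adj (induced_edges E (A \<union> B)))\<^sup>*\<^sup>* a b"
    using ab \<open>a \<in> A\<close> \<open>b \<in> B\<close> by (auto simp: adj_induced_edges_iff)
  moreover have "(adj (induced_edges E (A \<union> B)))\<^sup>*\<^sup>* x a" if "x \<in> A" for x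
    using A that \<open>a \<in> A\<close> induced_reach_mono[of A "A \<union> B"] by (auto simp: connected_on_def)
  moreover have "(adj (induced_edges E (A \<union> B)))\<^sup>*\<^sup>* x b" if "x \<in> B" for x
    using B that \<open>b \<in> B\<close> induced_reach_mono[of B "A \<union> B"] by (auto simp: connected_on_def)
  ultimately show "(adj (induced_edges E (A \<union> B)))\<^sup>*\<^sup>* x b" if "x \<in> A \<union> B" for x
    using that by (meson UnE rtranclp_trans)
qed

lemma connected_on_insert:
  assumes "connected_on E T" "b \<in> T" "adj E x b"
  shows "connected_on E (insert x T)"
  using connected_on_Un[OF connected_on_singleton assms(1) singletonI assms(2)] assms(3) by simp

lemma connected_on_isolated:
  assumes "connected_on E T" "a \<in> T" "\<And>y. y \<in> T \<Longrightarrow> \<not> adj E a y"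
  shows "T = {a}"
proof -
  have "y = a" if "y \<in> T" for y
  proof -
    have "(adj (induced_edges E T))\<^sup>*\<^sup>* a y"
      using assms that by (auto simp: connected_on_def)
    then show ?thesis
      by (rule converse_rtranclpE) (use assms in \<open>auto simp: adj_induced_edges_iff\<close>)
  qed
  then show ?thesis using assms(2) by blast
qed

lemma is_path_graphI:
  assumes "graph V E" "distinct xs" "set xs = V" "xs \<noteq> []"
    and adj_iff: "\<And>x y. x \<in> V \<Longrightarrow> y \<in> V \<Longrightarrow>
      adj E x y \<longleftrightarrow> {x, y} \<in> (\<lambda>(a, b). {a, b}) ` set (zip xs (tl xs))"
  shows "is_path_graph V E"
proof -
  have path_edges: "(\<lambda>(a, b). {a, b}) ` set (zip xs (tl xs)) = {{xs ! i, xs ! Suc i} | i. Suc i < length xs}"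
    by (force simp: set_zip nth_tl image_iff)
  have "E = {{xs ! i, xs ! Suc i} | i. Suc i < length xs}"
  proof
    show "E \<subseteq> {{xs ! i, xs ! Suc i} | i. Suc i < length xs}"
    proof
      fix e assume "e \<in> E"
      moreover obtain x y where "x \<noteq> y" "x \<in> V" "y \<in> V" "e = {x, y}"
        using assms(1) \<open>e \<in> E\<close> unfolding graph_def by blast
      ultimately show "e \<in> {{xs ! i, xs ! Suc i} | i. Suc i < length xs}"
        using adj_iff[of x y] unfolding path_edges adj_def by blast
    qed
    show "{{xs ! i, xs ! Suc i} | i. Suc i < length xs} \<subseteq> E"
    proof clarify
      fix i assume i: "Suc i < length xs"
      then have "xs ! i \<in> V" "xs ! Suc i \<in> V" "xs ! i \<noteq> xs ! Suc i"
        using assms(2,3) by (auto simp: nth_eq_iff_index_eq)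
      moreover have "{xs ! i, xs ! Suc i} \<in> {{xs ! i, xs ! Suc i} | i. Suc i < length xs}"
        using i by blast
      ultimately show "{xs ! i, xs ! Suc i} \<in> E"
        using adj_iff[of "xs ! i" "xs ! Suc i"] unfolding path_edges adj_def by blast
    qed
  qed
  then show ?thesis
    using assms(2-4) unfolding is_path_graph_def by blast
qed

definition good_graph :: "'a set \<Rightarrow> 'a set set \<Rightarrow> bool" where
  "good_graph V E \<longleftrightarrow> graph V E \<and> connected_graph V E \<and> triangle_free V E \<and>
     \<not> has_full_star_cutset V E \<and> \<not> (is_path_graph V E \<and> card V \<le> 4)"

lemma good_graph_not_P4:
  assumes good: "good_graph V E" and V: "V = {p, q, r, s}" and distinct: "distinct [p, q, r, s]"
    and "adj E p q" "adj E q r" "adj E r s" "\<not> adj E p r" "\<not> adj E p s" "\<not> adj E q s"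
  shows False
proof -
  have "graph V E" using good by (simp add: good_graph_def)
  moreover have "adj E q p" "adj E r q" "adj E s r" "\<not> adj E r p" "\<not> adj E s p" "\<not> adj E s q"
    using assms(4-9) by (simp_all add: adj_commute)
  ultimately have "is_path_graph V E"
    using assms(4-9) V distinct by (intro is_path_graphI[of V E "[p, q, r, s]"])
      (auto simp: doubleton_eq_iff adj_irrefl)
  moreover have "card V \<le> 4"
    using V distinct card_insert_le[of "{q, r, s}" p] by auto
  ultimately show False
    using good by (simp add: good_graph_def)
qed

lemma connected_triangle_free_card_le_3_is_path:
  assumes g: "graph V E" and c: "connected_graph V E" and tf: "triangle_free V E"
    and card: "card V \<le> 3"
  shows "is_path_graph V E"
proof -
  have has_nbr: "\<exists>z\<in>V. adj E x z" if "x \<in> V" "y \<in> V" "x \<noteq> y" for x y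
  proof -
    have "(adj E)\<^sup>*\<^sup>* x y" using c that by (simp add: connected_graph_def)
    then obtain z where "adj E x z" using \<open>x \<noteq> y\<close> by (blast elim: converse_rtranclpE)
    then show ?thesis using graph_adj_in_vertices[OF g] by blast
  qed
  have "card V > 0" using c g by (auto simp: connected_graph_def graph_def)
  then have "card V = 1 \<or> card V = 2 \<or> card V = 3" using card by linarith
  then consider "card V = 1" | "card V = 2" | "card V = 3" by blast
  then show ?thesis
  proof cases
    case 1
    then obtain x where "V = {x}" by (auto simp: card_1_singleton_iff)
    then show ?thesis by (intro is_path_graphI[of V E "[x]"]) (use g in \<open>auto simp: adj_irrefl\<close>)
  next
    case 2
    then obtain x y where V: "V = {x, y}" "x \<noteq> y" by (auto simp: card_2_iff)
    then have "adj E x y" using has_nbr[of x y] by (auto simp: adj_irrefl)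
    then show ?thesis
      using V by (intro is_path_graphI[of V E "[x, y]"]) (use g in \<open>auto simp: adj_irrefl adj_commute\<close>)
  next
    case 3
    then obtain x y z where V: "V = {x, y, z}" "x \<noteq> y" "y \<noteq> z" "x \<noteq> z"
      by (auto simp: card_3_iff)
    have no_triangle: "\<not> (adj E x y \<and> adj E y z \<and> adj E x z)"
      using tf V by (auto simp: triangle_free_def)
    have nbrs: "adj E x y \<or> adj E x z" "adj E x y \<or> adj E y z" "adj E x z \<or> adj E y z"
      using has_nbr[of x y] has_nbr[of y x] has_nbr[of z x] V by (auto simp: adj_irrefl adj_commute)
    have path: "is_path_graph V E"
      if "V = {p, q, r}" "distinct [p, q, r]" "adj E p q" "adj E q r" "\<not> adj E p r" for p q r
      using that g by (intro is_path_graphI[of V E "[p, q, r]"])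
        (auto simp: adj_irrefl adj_commute doubleton_eq_iff)
    consider "adj E x y" "adj E y z" "\<not> adj E x z" | "adj E y x" "adj E x z" "\<not> adj E y z"
      | "adj E x z" "adj E z y" "\<not> adj E x y"
      using no_triangle nbrs by (auto simp: adj_commute)
    then show ?thesis
    proof cases
      case 1 then show ?thesis using path[of x y z] V by simp
    next
      case 2 then show ?thesis using path[of y x z] V by (simp add: insert_commute)
    next
      case 3 then show ?thesis using path[of x z y] V by (simp add: insert_commute)
    qed
  qed
qed

lemma good_graph_nbhd_complement_connected:
  "good_graph V E \<Longrightarrow> x \<in> V \<Longrightarrow> connected_on E (V - closed_nbhd V E x)"
  by (simp add: good_graph_def no_full_star_cutset_iff)

lemma connected_on_minus_edge:
  assumes good: "good_graph V E" and uv: "adj E u v"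
  shows "connected_on E (V - {u, v})"
proof -
  have g: "graph V E" and tf: "triangle_free V E"
    using good by (auto simp: good_graph_def)
  have uV: "u \<in> V" "v \<in> V" using graph_adj_in_vertices[OF g uv] by auto
  let ?A = "V - closed_nbhd V E u" and ?B = "V - closed_nbhd V E v"
  have A: "connected_on E ?A" and B: "connected_on E ?B"
    using good_graph_nbhd_complement_connected[OF good] uV by auto
  have split: "V - {u, v} = ?A \<union> ?B"
    using uv triangle_freeD[OF g tf uv] by (auto simp: closed_nbhd_iff adj_commute)
  consider "?A \<inter> ?B \<noteq> {}" | "?A = {}" | "?B = {}"
    | a b where "a \<in> ?A" "b \<in> ?B" "?A \<inter> ?B = {}" by blast
  then show ?thesis
  proof cases
    case 1
    then obtain c where "c \<in> ?A" "c \<in> ?B" by blast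
    then show ?thesis unfolding split using connected_on_Un[OF A B] by blast
  next
    case 2 then show ?thesis unfolding split 2 using B by simp
  next
    case 3 then show ?thesis unfolding split 3 using A by simp
  next
    case (4 a b)
    have av: "adj E v a" and bu: "adj E u b"
      using 4 uv by (auto simp: closed_nbhd_iff adj_commute)
    show ?thesis
    proof (cases "adj E a b")
      case True
      then show ?thesis using connected_on_Un[OF A B 4(1,2)] split by simp
    next
      case False
      have "?A = {a}"
      proof (rule connected_on_isolated[OF A 4(1)])
        fix y assume "y \<in> ?A"
        then have "adj E v y" using 4(3) uv by (auto simp: closed_nbhd_iff)
        then show "\<not> adj E a y" using triangle_freeD[OF g tf _ _ av] by (metis adj_commute)
      qed
      moreover have "?B = {b}"
      proof (rule connected_on_isolated[OF B 4(2)])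
        fix y assume "y \<in> ?B"
        then have "adj E u y" using 4(3) uv by (auto simp: closed_nbhd_iff adj_commute)
        then show "\<not> adj E b y" using triangle_freeD[OF g tf _ _ bu] by (metis adj_commute)
      qed
      ultimately have "V = {a, v, u, b}" using split uV by blast
      moreover have "distinct [a, v, u, b]" "\<not> adj E a u" "\<not> adj E v b"
        using 4 uv by (auto simp: closed_nbhd_iff adj_commute)
      ultimately show ?thesis
        using good_graph_not_P4[OF good, of a v u b] av bu uv False by (simp add: adj_commute)
    qed
  qed
qed

text \<open>\<open>v\<close> is isolated in the connected graph \<open>G - N[a]\<close>, so that graph is just \<open>v\<close>.\<close>
lemma neighbour_of_leaf_neighbour_dominates:
  assumes good: "good_graph V E" and uv: "adj E u v" and leaf: "\<And>y. adj E v y \<Longrightarrow> y = u"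
    and ua: "adj E u a" "a \<noteq> v"
  shows "V - {v} \<subseteq> closed_nbhd V E a"
proof -
  let ?T = "V - closed_nbhd V E a"
  have g: "graph V E" using good by (simp add: good_graph_def)
  have "a \<in> V" "v \<in> V" using graph_adj_in_vertices[OF g] ua uv by blast+
  have "v \<in> ?T" using \<open>v \<in> V\<close> ua leaf[of a] by (auto simp: closed_nbhd_iff adj_commute adj_def)
  moreover have "\<not> adj E v z" if "z \<in> ?T" for z
    using that ua leaf[of z] by (auto simp: closed_nbhd_iff adj_commute)
  ultimately have "?T = {v}"
    using connected_on_isolated[OF good_graph_nbhd_complement_connected[OF good \<open>a \<in> V\<close>]] by blast
  then show ?thesis by auto
qed

lemma leaf_neighbour_dominates:
  assumes good: "good_graph V E" and uv: "adj E u v" and leaf: "\<And>y. adj E v y \<Longrightarrow> y = u"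
  shows "V \<subseteq> closed_nbhd V E u"
proof (rule ccontr)
  assume "\<not> V \<subseteq> closed_nbhd V E u"
  then obtain r where r: "r \<in> V" "r \<notin> closed_nbhd V E u" by blast
  have g: "graph V E" and c: "connected_graph V E" and tf: "triangle_free V E"
    using good by (auto simp: good_graph_def)
  have uV: "u \<in> V" "v \<in> V" using graph_adj_in_vertices[OF g uv] by auto
  have r_ne: "r \<noteq> u" "r \<noteq> v" "\<not> adj E u r" using r uv uV by (auto simp: closed_nbhd_iff)
  obtain a where ua: "adj E u a" "a \<noteq> v"
  proof (rule ccontr)
    assume "\<not> thesis"
    then have only_v: "\<And>y. adj E u y \<Longrightarrow> y = v" using that by blast
    have "(adj E)\<^sup>*\<^sup>* u r" using c uV r by (auto simp: connected_graph_def)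
    then have "r \<in> {u, v}"
      by (induction rule: rtranclp_induct) (auto dest: only_v leaf)
    then show False using r_ne by auto
  qed
  have aV: "a \<in> V" using graph_adj_in_vertices[OF g ua(1)] by auto
  have dominates: "y \<in> closed_nbhd V E a'"
    if "adj E u a'" "a' \<noteq> v" "y \<in> V" "y \<noteq> v" for a' y
    using neighbour_of_leaf_neighbour_dominates[OF good uv leaf] that by blast
  have a_unique: "a' = a" if "adj E u a'" "a' \<noteq> v" for a'
  proof (rule ccontr)
    assume "a' \<noteq> a"
    then have "adj E a a'" using dominates[OF ua, of a'] that graph_adj_in_vertices[OF g]
      by (auto simp: closed_nbhd_iff)
    then show False using triangle_freeD[OF g tf ua(1) _ that(1)] by blast
  qed
  have ar: "adj E a r" using dominates[OF ua r(1) r_ne(2)] r ua by (auto simp: closed_nbhd_iff)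
  have "V - closed_nbhd V E u = {r}"
  proof (rule connected_on_isolated[OF good_graph_nbhd_complement_connected[OF good uV(1)]])
    show "r \<in> V - closed_nbhd V E u" using r by blast
    fix y assume y: "y \<in> V - closed_nbhd V E u"
    then have "adj E a y" using dominates[OF ua, of y] uv ua by (auto simp: closed_nbhd_iff)
    then show "\<not> adj E r y" using triangle_freeD[OF g tf ar] by blast
  qed
  then have "V = {v, u, a, r}"
    using uV aV r a_unique by (auto simp: closed_nbhd_iff)
  moreover have "distinct [v, u, a, r]" "\<not> adj E v a" "\<not> adj E v r"
    using ua r_ne ar uv leaf[of a] leaf[of r] by (auto simp: adj_def)
  ultimately show False
    using good_graph_not_P4[OF good, of v u a r] uv ua ar r_ne by (simp add: adj_commute)
qed

lemma connected_on_nbhd_complement_insert: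
  assumes good: "good_graph V E" and uv: "adj E u v"
  shows "connected_on E (insert v (V - closed_nbhd V E u))"
proof (cases "\<exists>b. adj E v b \<and> b \<noteq> u")
  case True
  then obtain b where b: "adj E v b" "b \<noteq> u" by blast
  have g: "graph V E" and tf: "triangle_free V E"
    using good by (auto simp: good_graph_def)
  have "b \<in> V - closed_nbhd V E u"
    using b graph_adj_in_vertices[OF g b(1)] triangle_freeD[OF g tf uv b(1)]
    by (auto simp: closed_nbhd_iff)
  moreover have "u \<in> V" using graph_adj_in_vertices[OF g uv] by blast
  ultimately show ?thesis
    using connected_on_insert[OF good_graph_nbhd_complement_connected[OF good] _ b(1)] by blast
next
  case False
  then have "V - closed_nbhd V E u = {}"
    using leaf_neighbour_dominates[OF good uv] by blast
  show ?thesis unfolding \<open>V - closed_nbhd V E u = {}\<close> by (rule connected_on_singleton)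
qed

definition subdivide_edge :: "'a set set \<Rightarrow> 'a \<Rightarrow> 'a \<Rightarrow> 'a \<Rightarrow> 'a set set" where
  "subdivide_edge E u v w = (E - {{u, v}}) \<union> {{u, w}, {w, v}}"

locale edge_subdivision =
  fixes V :: "'a set" and E :: "'a set set" and u v w :: 'a
  assumes graph: "graph V E" and edge: "{u, v} \<in> E" and distinct_uv: "u \<noteq> v"
    and new_vertex: "w \<notin> V"
begin

abbreviation "V' \<equiv> insert w V"
abbreviation "E' \<equiv> subdivide_edge E u v w"

lemma adj_uv: "adj E u v"
  using edge distinct_uv by (simp add: adj_def)

lemma u_in_V: "u \<in> V" and v_in_V: "v \<in> V"
  using graph_adj_in_vertices[OF graph adj_uv] by auto

lemma w_ne: "w \<noteq> u" "w \<noteq> v"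
  using u_in_V v_in_V new_vertex by auto

lemma not_adj_new_vertex: "\<not> adj E x w" "\<not> adj E w x"
  using graph_adj_in_vertices[OF graph, of x w] graph_adj_in_vertices[OF graph, of w x] new_vertex
  by auto

lemma adj_subdivided_iff:
  "adj E' x y \<longleftrightarrow> (adj E x y \<and> {x, y} \<noteq> {u, v}) \<or> {x, y} = {u, w} \<or> {x, y} = {v, w}"
  using w_ne distinct_uv unfolding adj_def subdivide_edge_def by (auto simp: doubleton_eq_iff)

lemma graph_subdivided: "graph V' E'"
  using graph u_in_V v_in_V w_ne unfolding graph_def subdivide_edge_def by blast

lemma card_subdivided: "card V' = Suc (card V)"
  using graph new_vertex by (simp add: graph_def)

lemma triangle_free_subdivided:
  assumes tf: "triangle_free V E"
  shows "triangle_free V' E'"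
proof -
  have old: "adj E x y" if "adj E' x y" "x \<noteq> w" "y \<noteq> w" for x y
    using that w_ne by (auto simp: adj_subdivided_iff doubleton_eq_iff)
  have new: "y = u \<or> y = v" if "adj E' w y" for y
    using that not_adj_new_vertex by (auto simp: adj_subdivided_iff doubleton_eq_iff adj_commute)
  have not_uv: "\<not> adj E' u v"
    using w_ne distinct_uv by (auto simp: adj_subdivided_iff doubleton_eq_iff)
  have no_triangle: False if "adj E' x y" "adj E' y z" "adj E' x z" for x y z
  proof (cases "w \<in> {x, y, z}")
    case True
    have through_w: False if "adj E' w a" "adj E' w b" "adj E' a b" for a b
      using new[OF that(1)] new[OF that(2)] that(3) not_uv adj_irrefl adj_commute by metis
    from True consider "x = w" | "y = w" | "z = w" by blast
    then show False
      by cases (metis through_w that adj_commute)+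
  next
    case False
    then show False
      using that old triangle_freeD[OF graph tf] by blast
  qed
  show ?thesis
    unfolding triangle_free_def using no_triangle by blast
qed

lemma induced_reach_subdivided:
  assumes "(adj (induced_edges E T))\<^sup>*\<^sup>* a b"
  shows "(adj (induced_edges E' (insert w T)))\<^sup>*\<^sup>* a b"
proof -
  have "(adj (induced_edges E' (insert w T)))\<^sup>*\<^sup>* p q" if "adj (induced_edges E T) p q" for p q
  proof (cases "{p, q} = {u, v}")
    case True
    then have "adj (induced_edges E' (insert w T)) p w" "adj (induced_edges E' (insert w T)) w q"
      using that by (auto simp: adj_induced_edges_iff adj_subdivided_iff doubleton_eq_iff)
    then show ?thesis by (meson converse_rtranclp_into_rtranclp r_into_rtranclp)
  next
    case False
    then have "adj (induced_edges E' (insert w T)) p q"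
      using that by (auto simp: adj_induced_edges_iff adj_subdivided_iff)
    then show ?thesis by blast
  qed
  then show ?thesis
    using rtranclp_mono[of "adj (induced_edges E T)" "(adj (induced_edges E' (insert w T)))\<^sup>*\<^sup>*"]
      assms by auto
qed

lemma connected_on_subdivided:
  assumes conn: "connected_on E T" and uv: "u \<in> T \<or> v \<in> T"
  shows "connected_on E' (insert w T)"
proof -
  obtain c where c: "c \<in> T" "c = u \<or> c = v" using uv by blast
  show ?thesis
  proof (rule connected_onI_hub[of _ _ c])
    fix x assume "x \<in> insert w T"
    then consider "x = w" | "x \<in> T" by blast
    then show "(adj (induced_edges E' (insert w T)))\<^sup>*\<^sup>* x c"
    proof cases
      case 1
      then show ?thesis
        using c by (auto simp: adj_induced_edges_iff adj_subdivided_iff insert_commute)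
    next
      case 2
      then show ?thesis
        using conn c induced_reach_subdivided by (auto simp: connected_on_def)
    qed
  qed
qed

lemma induced_adj_unchanged:
  "w \<notin> T \<Longrightarrow> \<not> (u \<in> T \<and> v \<in> T) \<Longrightarrow> adj (induced_edges E' T) = adj (induced_edges E T)"
  by (auto simp: fun_eq_iff adj_induced_edges_iff adj_subdivided_iff doubleton_eq_iff)

lemma connected_on_unchanged:
  "w \<notin> T \<Longrightarrow> \<not> (u \<in> T \<and> v \<in> T) \<Longrightarrow> connected_on E' T \<longleftrightarrow> connected_on E T"
  by (simp add: connected_on_def induced_adj_unchanged)

lemma nbhd_complement_new_vertex: "V' - closed_nbhd V' E' w = V - {u, v}"
  using u_in_V v_in_V new_vertex not_adj_new_vertex
  by (auto simp: closed_nbhd_iff adj_subdivided_iff doubleton_eq_iff)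

lemma nbhd_complement_u: "V' - closed_nbhd V' E' u = insert v (V - closed_nbhd V E u)"
  using u_in_V v_in_V new_vertex w_ne distinct_uv not_adj_new_vertex adj_uv
  by (auto simp: closed_nbhd_iff adj_subdivided_iff doubleton_eq_iff)

lemma nbhd_complement_v: "V' - closed_nbhd V' E' v = insert u (V - closed_nbhd V E v)"
  using u_in_V v_in_V new_vertex w_ne distinct_uv not_adj_new_vertex adj_uv
  by (auto simp: closed_nbhd_iff adj_subdivided_iff doubleton_eq_iff adj_commute)

lemma nbhd_complement_old_vertex:
  "x \<in> V \<Longrightarrow> x \<noteq> u \<Longrightarrow> x \<noteq> v \<Longrightarrow>
    V' - closed_nbhd V' E' x = insert w (V - closed_nbhd V E x)"
  using new_vertex w_ne
  by (auto simp: closed_nbhd_iff adj_subdivided_iff doubleton_eq_iff adj_commute not_adj_new_vertex)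

end

context edge_subdivision
begin

lemma connected_subdivided: "connected_graph V E \<Longrightarrow> connected_graph V' E'"
  using connected_on_subdivided u_in_V
  by (simp add: connected_graph_iff_connected_on[OF graph] connected_graph_iff_connected_on[OF graph_subdivided])

lemma no_full_star_cutset_subdivided:
  assumes good: "good_graph V E"
  shows "\<not> has_full_star_cutset V' E'"
  unfolding no_full_star_cutset_iff
proof
  have tf: "triangle_free V E" using good by (simp add: good_graph_def)
  fix x assume "x \<in> V'"
  then consider "x = w" | "x = u" | "x = v" | "x \<in> V" "x \<noteq> u" "x \<noteq> v" by blast
  then show "connected_on E' (V' - closed_nbhd V' E' x)"
  proof cases
    case 1
    then show ?thesis
      using connected_on_minus_edge[OF good adj_uv] new_vertex
      by (simp add: nbhd_complement_new_vertex connected_on_unchanged)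
  next
    case 2
    let ?T = "insert v (V - closed_nbhd V E u)"
    have "connected_on E' ?T \<longleftrightarrow> connected_on E ?T"
      by (rule connected_on_unchanged) (use new_vertex w_ne distinct_uv in \<open>auto simp: closed_nbhd_iff\<close>)
    then show ?thesis
      unfolding 2 nbhd_complement_u using connected_on_nbhd_complement_insert[OF good adj_uv] by blast
  next
    case 3
    let ?T = "insert u (V - closed_nbhd V E v)"
    have "connected_on E' ?T \<longleftrightarrow> connected_on E ?T"
      by (rule connected_on_unchanged) (use new_vertex w_ne distinct_uv in \<open>auto simp: closed_nbhd_iff\<close>)
    moreover have "adj E v u" using adj_uv by (simp add: adj_commute)
    ultimately show ?thesis
      unfolding 3 nbhd_complement_v using connected_on_nbhd_complement_insert[OF good] by blast
  next
    case 4
    then have "u \<notin> closed_nbhd V E x \<or> v \<notin> closed_nbhd V E x"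
      using triangle_freeD[OF graph tf _ adj_uv] by (auto simp: closed_nbhd_iff)
    then show ?thesis
      using connected_on_subdivided[OF good_graph_nbhd_complement_connected[OF good 4(1)]]
        u_in_V v_in_V
      by (simp add: nbhd_complement_old_vertex 4)
  qed
qed

lemma good_graph_subdivided:
  assumes good: "good_graph V E"
  shows "good_graph V' E'"
proof -
  have "\<not> (is_path_graph V' E' \<and> card V' \<le> 4)"
  proof
    assume "is_path_graph V' E' \<and> card V' \<le> 4"
    then have "card V \<le> 3" by (simp add: card_subdivided)
    then have "is_path_graph V E"
      using good connected_triangle_free_card_le_3_is_path by (auto simp: good_graph_def)
    with \<open>card V \<le> 3\<close> good show False by (simp add: good_graph_def)
  qed
  then show ?thesis
    using good graph_subdivided connected_subdivided triangle_free_subdivided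
      no_full_star_cutset_subdivided
    by (simp add: good_graph_def)
qed

end

lemma good_graph_subdivision:
  "subdivision V E V' E' \<Longrightarrow> good_graph V E \<Longrightarrow> good_graph V' E'"
proof (induction rule: subdivision.induct)
  case refl
  then show ?case .
next
  case (step V' E' u v w)
  then interpret edge_subdivision V' E' u v w
    by unfold_locales (simp_all add: good_graph_def)
  show ?case
    using good_graph_subdivided step by (simp add: subdivide_edge_def)
qed

theorem mainTheorem18:
  fixes V :: "'a set" and E :: "'a set set"
  assumes "graph V E"
    and "connected_graph V E"
    and "triangle_free V E"
    and "\<not> has_full_star_cutset V E"
    and "\<not> (is_path_graph V E \<and> card V \<le> 4)"
    and "subdivision V E V' E'"
  shows "connected_graph V' E' \<and> triangle_free V' E' \<and> \<not> has_full_star_cutset V' E'"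
proof -
  have "good_graph V E" using assms(1-5) by (simp add: good_graph_def)
  then have "good_graph V' E'" using good_graph_subdivision assms(6) by blast
  then show ?thesis by (simp add: good_graph_def)
qed

end
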